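(* Let $\mathcal{C}$ be the full subcategory of $q\mathrm{Set}=\mathrm{PSh}(\mathrm{Coalg})$ consisting of the presheaves of the form $\mathcal{Y}(D)=\mathrm{Coalg}(-,D)$, $D$ a coalgebra. For coalgebras $D_1,D_2$ and $X_i:=\mathcal{Y}(D_i)$, define for every coalgebra $C$ $$(X_1\times_{\mathcal{C}}X_2)(C):=\{(x_1,x_2)\in X_1(C)\times X_2(C)\ :\ x_1(c_{(1)})\otimes x_2(c_{(2)})=x_1(c_{(2)})\otimes x_2(c_{(1)})\in D_1\otimes D_2\ \text{ for all } c\in C\}.$$ Then: (i) $X_1\times_{\mathcal{C}}X_2$ is a sub-presheaf of the argument-wise product $X_1\times X_2$; for every $(x_1,x_2)\in (X_1\times_{\mathcal{C}}X_2)(C)$ the linear map $(x_1,x_2):C\to D_1\otimes D_2$, $c\mapsto x_1(c_{(1)})\otimes x_2(c_{(2)})$, is a coalgebra map (for the tensor product coalgebra structure on $D_1\otimes D_2$), and $(x_1,x_2)\mapsto (x_1,x_2)$ defines an isomorphism of presheaves $X_1\times_{\mathcal{C}}X_2\cong \mathcal{Y}(D_1\otimes D_2)$; in particular $X_1\times_{\mathcal C}X_2\in\mathcal C$. (ii) (Partial associativity) For coalgebras $D_1,D_2,D_3$, $X_i=\mathcal{Y}(D_i)$, and $x_i\in X_i(C)$, the conditions $$(x_1,x_2)\in (X_1\times_{\mathcal{C}}X_2)(C)\ \text{ and }\ ((x_1,x_2),x_3)\in (\mathcal{Y}(D_1\otimes D_2)\times_{\mathcal{C}}X_3)(C)$$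 hold if and only if $$(x_2,x_3)\in (X_2\times_{\mathcal{C}}X_3)(C)\ \text{ and }\ (x_1,(x_2,x_3))\in (X_1\times_{\mathcal{C}}\mathcal{Y}(D_2\otimes D_3))(C),$$ and in that case $((x_1,x_2),x_3)=(x_1,(x_2,x_3))$ as coalgebra maps $C\to D_1\otimes D_2\otimes D_3$. (iii) (Unit) With $\{\bullet\}=\mathcal{Y}(\Bbbk\{\bullet\})$ the terminal presheaf, for every $X=\mathcal{Y}(D)$ one has $\{\bullet\}\times_{\mathcal{C}}X=\{\bullet\}\times X$ and $X\times_{\mathcal{C}}\{\bullet\}=X\times\{\bullet\}$. (iv) (Symmetry) $(x_1,x_2)\in(X_1\times_{\mathcal{C}}X_2)(C)$ iff $(x_2,x_1)\in(X_2\times_{\mathcal{C}}X_1)(C)$, and then $\tau\circ(x_1,x_2)=(x_2,x_1)$, where $\tau:D_1\otimes D_2\to D_2\otimes D_1$ is the flip.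
   Context: $\Bbbk$ is a field of characteristic zero. $\mathrm{Coalg}$ is the category of counital coassociative $\Bbbk$-coalgebras; Sweedler notation $\Delta(c)=c_{(1)}\otimes c_{(2)}$ is used. The tensor product $D_1\otimes D_2$ of coalgebras has $\Delta(d_1\otimes d_2)=d_{1(1)}\otimes d_{2(1)}\otimes d_{1(2)}\otimes d_{2(2)}$ and $\varepsilon(d_1\otimes d_2)=\varepsilon(d_1)\varepsilon(d_2)$; its unit is $\Bbbk\{\bullet\}$ (one group-like basis element). $q\mathrm{Set}$ is the category of presheaves of sets on $\mathrm{Coalg}$, $\mathcal{Y}$ the Yoneda embedding. The only element of $\mathcal{Y}(\Bbbk\{\bullet\})(C)$ is the counit $\varepsilon_C$ (identified with $c\mapsto\varepsilon(c)\bullet$). *)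

theory Defs
  imports Main
begin

text \<open>Every vector space has a basis, so a coalgebra is
modelled on the space of finitely supported functions B \<Rightarrow> 'k on a basis set B.
Linear maps are given by their (finitely supported) values on basis elements and are
normalised to be zero outside the basis, so the representation is canonical.
Tensor product of spaces with bases B1, B2 is the space with basis B1 \<times> B2.\<close>

record ('b, 'k) coalg =
  cb :: "'b set"
  comult :: "'b \<Rightarrow> 'b \<times> 'b \<Rightarrow> 'k"
  counit :: "'b \<Rightarrow> 'k"

definition vin :: "'a set \<Rightarrow> ('a \<Rightarrow> 'k::zero) \<Rightarrow> bool" where
  "vin B v \<longleftrightarrow> finite {x. v x \<noteq> 0} \<and> {x. v x \<noteq> 0} \<subseteq> B"

definition lin :: "('a \<Rightarrow> 'b \<Rightarrow> 'k::comm_ring_1) \<Rightarrow> ('a \<Rightarrow> 'k) \<Rightarrow> 'b \<Rightarrow> 'k" where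
  "lin f v = (\<lambda>y. \<Sum>x | v x \<noteq> 0. v x * f x y)"

definition idm :: "'a \<Rightarrow> 'a \<Rightarrow> 'k::comm_ring_1" where
  "idm a = (\<lambda>x. if x = a then 1 else 0)"

definition tmap :: "('a \<Rightarrow> 'x \<Rightarrow> 'k::comm_ring_1) \<Rightarrow> ('b \<Rightarrow> 'y \<Rightarrow> 'k) \<Rightarrow> 'a \<times> 'b \<Rightarrow> 'x \<times> 'y \<Rightarrow> 'k" where
  "tmap f g = (\<lambda>p q. f (fst p) (fst q) * g (snd p) (snd q))"

definition is_coalg :: "('b, 'k::field) coalg \<Rightarrow> bool" where
  "is_coalg C \<longleftrightarrow>
     (\<forall>b. b \<notin> cb C \<longrightarrow> comult C b = (\<lambda>_. 0) \<and> counit C b = 0) \<and>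
     (\<forall>b\<in>cb C. vin (cb C \<times> cb C) (comult C b)) \<and>
     (\<forall>b\<in>cb C. \<forall>x y z.
        lin (tmap (comult C) idm) (comult C b) ((x, y), z)
        = lin (tmap idm (comult C)) (comult C b) (x, (y, z))) \<and>
     (\<forall>b\<in>cb C. \<forall>x.
        lin (\<lambda>p x. counit C (fst p) * idm (snd p) x) (comult C b) x = idm b x) \<and>
     (\<forall>b\<in>cb C. \<forall>x.
        lin (\<lambda>p x. idm (fst p) x * counit C (snd p)) (comult C b) x = idm b x)"

definition coalg_map :: "('c, 'k::field) coalg \<Rightarrow> ('d, 'k) coalg \<Rightarrow> ('c \<Rightarrow> 'd \<Rightarrow> 'k) \<Rightarrow> bool" where
  "coalg_map C D f \<longleftrightarrow>
     (\<forall>c. c \<notin> cb C \<longrightarrow> f c = (\<lambda>_. 0)) \<and>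
     (\<forall>c\<in>cb C. vin (cb D) (f c)) \<and>
     (\<forall>c\<in>cb C. lin (tmap f f) (comult C c) = lin (comult D) (f c)) \<and>
     (\<forall>c\<in>cb C. (\<Sum>y | f c y \<noteq> 0. f c y * counit D y) = counit C c)"

definition yon :: "('d, 'k::field) coalg \<Rightarrow> ('c, 'k) coalg \<Rightarrow> ('c \<Rightarrow> 'd \<Rightarrow> 'k) set" where
  "yon D C = {f. coalg_map C D f}"

text \<open>presheaf action: precomposition x \<circ> f for f : C' \<rightarrow> C\<close>
definition comp :: "('c2 \<Rightarrow> 'c \<Rightarrow> 'k::comm_ring_1) \<Rightarrow> ('c \<Rightarrow> 'd \<Rightarrow> 'k) \<Rightarrow> 'c2 \<Rightarrow> 'd \<Rightarrow> 'k" where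
  "comp f x = (\<lambda>c'. lin x (f c'))"

definition tensor :: "('a, 'k::field) coalg \<Rightarrow> ('b, 'k) coalg \<Rightarrow> ('a \<times> 'b, 'k) coalg" where
  "tensor D1 D2 = \<lparr> cb = cb D1 \<times> cb D2,
     comult = (\<lambda>p q. comult D1 (fst p) (fst (fst q), fst (snd q))
                     * comult D2 (snd p) (snd (fst q), snd (snd q))),
     counit = (\<lambda>p. counit D1 (fst p) * counit D2 (snd p)) \<rparr>"

definition unitC :: "(unit, 'k::field) coalg" where
  "unitC = \<lparr> cb = UNIV, comult = (\<lambda>_ _. 1), counit = (\<lambda>_. 1) \<rparr>"

definition pairing :: "('c, 'k::field) coalg \<Rightarrow> ('c \<Rightarrow> 'a \<Rightarrow> 'k) \<Rightarrow> ('c \<Rightarrow> 'b \<Rightarrow> 'k) \<Rightarrow> 'c \<Rightarrow> 'a \<times> 'b \<Rightarrow> 'k" where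
  "pairing C x1 x2 = (\<lambda>c. lin (tmap x1 x2) (comult C c))"

definition cprod :: "('a, 'k::field) coalg \<Rightarrow> ('b, 'k) coalg \<Rightarrow> ('c, 'k) coalg
                     \<Rightarrow> (('c \<Rightarrow> 'a \<Rightarrow> 'k) \<times> ('c \<Rightarrow> 'b \<Rightarrow> 'k)) set" where
  "cprod D1 D2 C = {(x1, x2). x1 \<in> yon D1 C \<and> x2 \<in> yon D2 C \<and>
     (\<forall>v. vin (cb C) v \<longrightarrow>
        lin (tmap x1 x2) (lin (comult C) v) = lin (tmap x1 x2) (lin (comult C) v \<circ> prod.swap))}"

end

theory Submission
  imports Defs "HOL-Library.Groups_Big_Fun"
begin

text \<open>Linear maps are handled as matrices over bases, composed by \<open>comp\<close>; the pairing
  \<open>(x\<^sub>1, x\<^sub>2)\<close> is the comultiplication of \<open>C\<close> followed by \<open>x\<^sub>1 \<otimes> x\<^sub>2\<close>, and the condition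
  defining \<open>X\<^sub>1 \<times>\<^sub>\<C> X\<^sub>2\<close> says that it does not change when the two tensor legs of \<open>\<Delta> c\<close> are
  swapped. Under this condition coassociativity turns the comultiplicativity of \<open>x\<^sub>1\<close> and \<open>x\<^sub>2\<close>
  into comultiplicativity of the pairing for the tensor product coalgebra. Applying the counit to
  one leg of a pairing returns the other component, which gives injectivity, and a coalgebra map
  \<open>g : C \<rightarrow> D\<^sub>1 \<otimes> D\<^sub>2\<close> is the pairing of its projections \<open>(id \<otimes> \<epsilon>) \<circ> g\<close> and
  \<open>(\<epsilon> \<otimes> id) \<circ> g\<close>, which gives surjectivity. The same counit marginalisation extracts the
  pairwise conditions from the conditions on a triple, giving one direction of partial
  associativity; the other direction follows from it by symmetry.\<close>

section \<open>Matrices with finite rows\<close>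

definition finite_rows :: "('a \<Rightarrow> 'b \<Rightarrow> 'k::zero) \<Rightarrow> bool" where
  "finite_rows M \<longleftrightarrow> (\<forall>a. finite {b. M a b \<noteq> 0})"

lemma finite_rowsD: "finite_rows M \<Longrightarrow> finite {b. M a b \<noteq> 0}"
  unfolding finite_rows_def by blast

lemma lin_eq_Sum_any:
  fixes v :: "'a \<Rightarrow> 'k::comm_ring_1"
  assumes "finite {x. v x \<noteq> 0}"
  shows "lin f v y = (\<Sum>x. v x * f x y)"
  unfolding lin_def
  by (rule Sum_any.expand_superset[symmetric]) (use assms in auto)

lemma comp_eq_Sum_any:
  fixes M :: "'a \<Rightarrow> 'b \<Rightarrow> 'k::comm_ring_1"
  assumes "finite_rows M"
  shows "comp M N a y = (\<Sum>x. M a x * N x y)"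
  using assms by (simp add: comp_def lin_eq_Sum_any finite_rowsD)

lemma lin_nonzeroE:
  fixes v :: "'a \<Rightarrow> 'k::comm_ring_1"
  assumes "lin f v y \<noteq> 0"
  obtains x where "v x \<noteq> 0" "f x y \<noteq> 0"
proof -
  have "\<exists>x. v x \<noteq> 0 \<and> f x y \<noteq> 0"
  proof (rule ccontr)
    assume "\<not> ?thesis"
    then have "lin f v y = 0" unfolding lin_def by (auto intro!: sum.neutral)
    with assms show False by simp
  qed
  with that show thesis by blast
qed

lemma finite_nonzero_mult_left:
  "finite {x. f x \<noteq> (0::'k::mult_zero)} \<Longrightarrow> finite {x. f x * g x \<noteq> 0}"
  by (rule finite_subset[of _ "{x. f x \<noteq> 0}"]) auto

lemma finite_lin_support:
  fixes v :: "'a \<Rightarrow> 'k::comm_ring_1"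
  assumes "finite {x. v x \<noteq> 0}" "finite_rows f"
  shows "finite {y. lin f v y \<noteq> 0}"
proof (rule finite_subset)
  show "{y. lin f v y \<noteq> 0} \<subseteq> (\<Union>x\<in>{x. v x \<noteq> 0}. {y. f x y \<noteq> 0})"
    by (auto elim: lin_nonzeroE)
  show "finite (\<Union>x\<in>{x. v x \<noteq> 0}. {y. f x y \<noteq> 0})"
    using assms by (auto simp: finite_rowsD)
qed

lemma finite_rows_comp:
  "finite_rows M \<Longrightarrow> finite_rows N \<Longrightarrow> finite_rows (comp M (N :: 'b \<Rightarrow> 'c \<Rightarrow> 'k::comm_ring_1))"
  unfolding finite_rows_def comp_def by (auto intro: finite_lin_support simp: finite_rows_def)

lemma comp_assoc:
  fixes M :: "'a \<Rightarrow> 'b \<Rightarrow> 'k::comm_ring_1"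
  assumes M: "finite_rows M" and N: "finite_rows N"
  shows "comp (comp M N) P = comp M (comp N P)"
proof (intro ext)
  fix a p
  let ?A = "{x. M a x \<noteq> 0}"
  let ?B = "\<Union>x\<in>?A. {y. N x y \<noteq> 0}"
  have fin_A: "finite ?A" and fin_B: "finite ?B"
    using M N by (auto simp: finite_rowsD)
  have "comp (comp M N) P a p = (\<Sum>y. comp M N a y * P y p)"
    using finite_rows_comp[OF M N] by (rule comp_eq_Sum_any)
  also have "\<dots> = (\<Sum>y. \<Sum>x. M a x * N x y * P y p)"
    using M fin_A by (simp add: comp_eq_Sum_any Sum_any_left_distrib finite_nonzero_mult_left)
  also have "\<dots> = (\<Sum>x. \<Sum>y. M a x * N x y * P y p)"
    by (rule Sum_any.swap[of "?B \<times> ?A" "\<lambda>y x. M a x * N x y * P y p"])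
       (use fin_A fin_B in \<open>auto dest!: mult_not_zero\<close>)
  also have "\<dots> = (\<Sum>x. M a x * comp N P x p)"
  proof (rule Sum_any.cong)
    fix x
    have "finite {y. N x y * P y p \<noteq> 0}"
      using N by (simp add: finite_rowsD finite_nonzero_mult_left)
    then show "(\<Sum>y. M a x * N x y * P y p) = M a x * comp N P x p"
      using N by (simp add: comp_eq_Sum_any Sum_any_right_distrib mult.assoc)
  qed
  also have "\<dots> = comp M (comp N P) a p"
    using M by (simp add: comp_eq_Sum_any)
  finally show "comp (comp M N) P a p = comp M (comp N P) a p" .
qed

lemma finite_rows_tmap:
  "finite_rows A \<Longrightarrow> finite_rows B \<Longrightarrow> finite_rows (tmap A (B :: 'c \<Rightarrow> 'd \<Rightarrow> 'k::comm_ring_1))"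
  unfolding finite_rows_def
proof (intro allI)
  fix p
  assume "\<forall>a. finite {b. A a b \<noteq> 0}" "\<forall>a. finite {b. B a b \<noteq> 0}"
  then show "finite {q. tmap A B p q \<noteq> 0}"
    by (rule_tac finite_subset[of _ "{b. A (fst p) b \<noteq> 0} \<times> {b. B (snd p) b \<noteq> 0}"])
       (auto simp: tmap_def)
qed

lemma tmap_apply: "tmap A B (a, b) (p, q) = A a p * B b q"
  by (simp add: tmap_def)

lemma comp_tmap:
  fixes A :: "'a \<Rightarrow> 'x \<Rightarrow> 'k::comm_ring_1" and B :: "'b \<Rightarrow> 'y \<Rightarrow> 'k"
  assumes A: "finite_rows A" and B: "finite_rows B"
  shows "comp (tmap A B) (tmap P Q) = tmap (comp A P) (comp B Q)"
proof (intro ext, clarify)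
  fix a b p q
  have fa: "finite {x. A a x \<noteq> 0}" and fb: "finite {y. B b y \<noteq> 0}"
    using A B by (auto simp: finite_rowsD)
  have "comp (tmap A B) (tmap P Q) (a, b) (p, q) = (\<Sum>(x, y). (A a x * P x p) * (B b y * Q y q))"
    using finite_rows_tmap[OF A B] by (simp add: comp_eq_Sum_any tmap_def split_def ac_simps)
  also have "\<dots> = (\<Sum>x. \<Sum>y. (A a x * P x p) * (B b y * Q y q))"
    by (rule Sum_any.cartesian_product[symmetric, of "{x. A a x \<noteq> 0} \<times> {y. B b y \<noteq> 0}"])
       (use fa fb in auto)
  also have "\<dots> = (\<Sum>x. A a x * P x p * (\<Sum>y. B b y * Q y q))"
    using fb by (simp add: Sum_any_right_distrib finite_nonzero_mult_left)
  also have "\<dots> = (\<Sum>x. A a x * P x p) * (\<Sum>y. B b y * Q y q)"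
    using fa by (simp add: Sum_any_left_distrib finite_nonzero_mult_left)
  also have "\<dots> = tmap (comp A P) (comp B Q) (a, b) (p, q)"
    using A B by (simp add: comp_eq_Sum_any tmap_def)
  finally show "comp (tmap A B) (tmap P Q) (a, b) (p, q) = tmap (comp A P) (comp B Q) (a, b) (p, q)" .
qed

lemma finite_rows_idm: "finite_rows (idm :: 'a \<Rightarrow> 'a \<Rightarrow> 'k::field)"
  unfolding finite_rows_def idm_def by auto

lemma lin_idm: "lin N (idm a :: 'a \<Rightarrow> 'k::field) = N a"
proof -
  have "{x. idm a x \<noteq> (0::'k)} = {a}" by (auto simp: idm_def)
  then show ?thesis unfolding lin_def by (simp add: idm_def)
qed

lemma comp_idm_left: "comp (idm :: 'a \<Rightarrow> 'a \<Rightarrow> 'k::field) N = N"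
  unfolding comp_def by (simp add: lin_idm)

lemma comp_idm_right:
  fixes M :: "'a \<Rightarrow> 'b \<Rightarrow> 'k::field"
  assumes "finite_rows M"
  shows "comp M idm = M"
  using assms by (intro ext) (simp add: comp_eq_Sum_any idm_def if_distrib cong: if_cong)

lemma idm_pair: "idm (a, b) (c, d) = (idm a c * idm b d :: 'k::field)"
  by (auto simp: idm_def)

lemma lin_smult_idm: "lin N (\<lambda>x. s * idm a x) y = s * (N a y :: 'k::field)"
proof (cases "s = 0")
  case False
  then have "{x. s * idm a x \<noteq> (0::'k)} = {a}" by (auto simp: idm_def)
  then show ?thesis unfolding lin_def by (simp add: idm_def)
qed (simp add: lin_def)

lemma lin_reindex:
  fixes v :: "'a \<Rightarrow> 'k::comm_ring_1"
  assumes gh: "\<And>x. g (h x) = x" and hg: "\<And>y. h (g y) = y"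
    and fin: "finite {x. v x \<noteq> 0}"
    and vv: "\<And>x. v' (h x) = v x" and ff: "\<And>x. f' (h x) w' = f x w"
  shows "lin f v w = lin f' v' w'"
proof -
  have bij: "bij h" by (rule o_bij[of g]) (auto simp: gh hg)
  have "{y. v' y \<noteq> 0} \<subseteq> h ` {x. v x \<noteq> 0}"
    using vv hg by (metis (mono_tags, lifting) image_eqI mem_Collect_eq subsetI)
  then have fin': "finite {y. v' y \<noteq> 0}"
    using fin by (rule finite_subset[OF _ finite_imageI])
  have "lin f' v' w' = (\<Sum>y. v' y * f' y w')" using fin' by (rule lin_eq_Sum_any)
  also have "\<dots> = (\<Sum>x. v x * f x w)"
    by (rule Sum_any.reindex_cong[OF bij]) (simp add: vv ff o_def)
  also have "\<dots> = lin f v w" using fin by (simp add: lin_eq_Sum_any)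
  finally show ?thesis by simp
qed

lemma lin_comp:
  fixes v :: "'a \<Rightarrow> 'k::comm_ring_1"
  assumes "finite {x. v x \<noteq> 0}" "finite_rows N"
  shows "lin P (lin N v) = lin (comp N P) v"
proof -
  have "finite_rows (\<lambda>_::unit. v)" using assms(1) unfolding finite_rows_def by auto
  from comp_assoc[OF this assms(2), of P] show ?thesis
    by (simp add: comp_def fun_eq_iff)
qed

lemma comp_zero_row: "M a = (\<lambda>_. 0) \<Longrightarrow> comp M N a = (\<lambda>_. (0::'k::comm_ring_1))"
  unfolding comp_def lin_def by auto

lemma lin_cong_support: "(\<And>x. v x \<noteq> 0 \<Longrightarrow> f x w = f' x w') \<Longrightarrow> lin f v w = lin f' v w'"
  unfolding lin_def by (auto intro!: sum.cong)

lemma comp_reindex_column: "comp M (\<lambda>p x. N p (k x)) a x = comp M N a (k x)"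
  by (simp add: comp_def lin_def)

lemma finite_rows_swap: "finite_rows M \<Longrightarrow> finite_rows (\<lambda>x. M x \<circ> prod.swap)"
  unfolding finite_rows_def o_def
proof
  fix a assume "\<forall>a. finite {b. M a b \<noteq> 0}"
  then have "finite (prod.swap -` {b. M a b \<noteq> 0})" by (intro finite_vimageI) auto
  then show "finite {b. M a (prod.swap b) \<noteq> 0}" by (simp add: vimage_def)
qed

section \<open>Counits and comultiplications as matrices\<close>

definition counit_map :: "('b, 'k::field) coalg \<Rightarrow> 'b \<Rightarrow> unit \<Rightarrow> 'k" where
  "counit_map D = (\<lambda>y _. counit D y)"

definition counit_left :: "('b, 'k::field) coalg \<Rightarrow> 'b \<times> 'a \<Rightarrow> 'a \<Rightarrow> 'k" where
  "counit_left D = (\<lambda>p x. counit D (fst p) * idm (snd p) x)"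

definition counit_right :: "('b, 'k::field) coalg \<Rightarrow> 'a \<times> 'b \<Rightarrow> 'a \<Rightarrow> 'k" where
  "counit_right D = (\<lambda>p x. idm (fst p) x * counit D (snd p))"

lemma finite_rows_counit_map: "finite_rows (counit_map D)"
  unfolding finite_rows_def by simp

lemma finite_rows_counit_left: "finite_rows (counit_left D)"
  unfolding finite_rows_def counit_left_def
  by (auto intro: finite_subset[of _ "{snd p}" for p] simp: idm_def)

lemma finite_rows_counit_right: "finite_rows (counit_right D)"
  unfolding finite_rows_def counit_right_def
  by (auto intro: finite_subset[of _ "{fst p}" for p] simp: idm_def)

lemma counit_left_eq_tmap: "counit_left D = (\<lambda>p x. tmap (counit_map D) idm p ((), x))"
  by (intro ext) (simp add: counit_left_def tmap_def counit_map_def)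

lemma counit_right_eq_tmap: "counit_right D = (\<lambda>p x. tmap idm (counit_map D) p (x, ()))"
  by (intro ext) (simp add: counit_right_def tmap_def counit_map_def)

lemma lin_counit_left:
  fixes v :: "'b \<times> 'a \<Rightarrow> 'k::field"
  assumes fin: "finite {z. v z \<noteq> 0}"
  shows "lin (counit_left D) v w = (\<Sum>p. counit D p * v (p, w))"
proof -
  let ?S = "{z. v z \<noteq> 0}"
  have "lin (counit_left D) v w = (\<Sum>(p, a). v (p, a) * (counit D p * idm a w))"
    using fin by (simp add: lin_eq_Sum_any counit_left_def split_def)
  also have "\<dots> = (\<Sum>p. \<Sum>a. v (p, a) * (counit D p * idm a w))"
    by (rule Sum_any.cartesian_product[symmetric, of "fst ` ?S \<times> snd ` ?S"])
       (use fin in simp, force)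
  also have "\<dots> = (\<Sum>p. counit D p * v (p, w))"
    by (simp add: idm_def if_distrib mult.commute cong: if_cong)
  finally show ?thesis .
qed

lemma lin_counit_right:
  fixes v :: "'a \<times> 'b \<Rightarrow> 'k::field"
  assumes fin: "finite {z. v z \<noteq> 0}"
  shows "lin (counit_right D) v w = (\<Sum>q. v (w, q) * counit D q)"
proof -
  let ?S = "{z. v z \<noteq> 0}"
  have "lin (counit_right D) v w = (\<Sum>(a, q). idm a w * (v (a, q) * counit D q))"
    using fin by (simp add: lin_eq_Sum_any counit_right_def split_def ac_simps)
  also have "\<dots> = (\<Sum>a. \<Sum>q. idm a w * (v (a, q) * counit D q))"
    by (rule Sum_any.cartesian_product[symmetric, of "fst ` ?S \<times> snd ` ?S"])
       (use fin in simp, force)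
  also have "\<dots> = (\<Sum>q. \<Sum>a. idm a w * (v (a, q) * counit D q))"
    by (rule Sum_any.swap[of "fst ` ?S \<times> snd ` ?S"])
       (use fin in simp, force)
  also have "\<dots> = (\<Sum>q. v (w, q) * counit D q)"
    by (simp add: idm_def if_distrib[of "\<lambda>x. x * _"] cong: if_cong)
  finally show ?thesis .
qed

lemma pairing_eq_comp: "pairing C x1 x2 = comp (comult C) (tmap x1 x2)"
  by (simp add: pairing_def comp_def)

lemma pairing_cong_left:
  "(\<And>u. Y u w = Y' u w') \<Longrightarrow> pairing C Y Z c (w, r) = pairing C Y' Z c (w', r)"
  unfolding pairing_def lin_def tmap_def by simp

lemma pairing_cong_right:
  "(\<And>u. Z u w = Z' u w') \<Longrightarrow> pairing C Y Z c (r, w) = pairing C Y Z' c (r, w')"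
  unfolding pairing_def lin_def tmap_def by simp

text \<open>The condition defining \<open>cprod\<close>, stated on basis vectors \<open>c\<close>: its right-hand side
  \<open>x1(c\<^sub>(\<^sub>2\<^sub>)) \<otimes> x2(c\<^sub>(\<^sub>1\<^sub>))\<close> is the flip of the pairing of \<open>x2\<close> with \<open>x1\<close>.\<close>
definition commuting :: "('c, 'k::field) coalg \<Rightarrow> ('c \<Rightarrow> 'a \<Rightarrow> 'k) \<Rightarrow> ('c \<Rightarrow> 'b \<Rightarrow> 'k) \<Rightarrow> bool" where
  "commuting C x1 x2 \<longleftrightarrow> (\<forall>c p q. pairing C x1 x2 c (p, q) = pairing C x2 x1 c (q, p))"

lemma commuting_sym: "commuting C x1 x2 \<longleftrightarrow> commuting C x2 x1"
  unfolding commuting_def by metis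

context
  fixes C :: "('c, 'k::field) coalg"
  assumes co: "is_coalg C"
begin

lemma comult_outside: "c \<notin> cb C \<Longrightarrow> comult C c = (\<lambda>_. 0)"
  using co unfolding is_coalg_def by auto

lemma counit_map_outside: "c \<notin> cb C \<Longrightarrow> counit_map C c = (\<lambda>_. 0)"
  using co unfolding is_coalg_def counit_map_def by auto

lemma finite_rows_comult: "finite_rows (comult C)"
  unfolding finite_rows_def
proof
  fix c show "finite {b. comult C c b \<noteq> 0}"
    using co unfolding is_coalg_def vin_def by (cases "c \<in> cb C") auto
qed

lemma comult_coassoc:
  "comp (comult C) (tmap (comult C) idm) c ((x, y), z)
   = comp (comult C) (tmap idm (comult C)) c (x, (y, z))"
proof (cases "c \<in> cb C")
  case True then show ?thesis using co unfolding is_coalg_def comp_def by blast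
qed (simp add: comp_zero_row comult_outside)

lemma comp_comult_counit_left: "c \<in> cb C \<Longrightarrow> comp (comult C) (counit_left C) c = idm c"
  using co unfolding is_coalg_def comp_def counit_left_def by (auto simp: fun_eq_iff)

lemma comp_comult_counit_right: "c \<in> cb C \<Longrightarrow> comp (comult C) (counit_right C) c = idm c"
  using co unfolding is_coalg_def comp_def counit_right_def by (auto simp: fun_eq_iff)

lemma finite_rows_pairing: "finite_rows Y \<Longrightarrow> finite_rows Z \<Longrightarrow> finite_rows (pairing C Y Z)"
  unfolding pairing_eq_comp by (intro finite_rows_comp finite_rows_comult finite_rows_tmap)

lemma pairing_outside: "c \<notin> cb C \<Longrightarrow> pairing C Y Z c = (\<lambda>_. 0)"
  by (simp add: pairing_eq_comp comp_zero_row comult_outside)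

lemma pairing_assoc:
  "pairing C (pairing C Y1 Y2) Y3 c ((p, q), r) = pairing C Y1 (pairing C Y2 Y3) c (p, (q, r))"
proof -
  have rows: "finite_rows (tmap (comult C) idm)" "finite_rows (tmap idm (comult C))"
    by (simp_all add: finite_rows_tmap finite_rows_comult finite_rows_idm)
  have left: "pairing C (pairing C Y1 Y2) Y3
      = comp (comp (comult C) (tmap (comult C) idm)) (tmap (tmap Y1 Y2) Y3)"
  proof -
    have "pairing C (pairing C Y1 Y2) Y3
        = comp (comult C) (tmap (comp (comult C) (tmap Y1 Y2)) (comp idm Y3))"
      by (simp add: pairing_eq_comp comp_idm_left)
    also have "\<dots> = comp (comp (comult C) (tmap (comult C) idm)) (tmap (tmap Y1 Y2) Y3)"
      by (simp add: comp_tmap comp_assoc finite_rows_comult finite_rows_idm rows)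
    finally show ?thesis .
  qed
  have right: "pairing C Y1 (pairing C Y2 Y3)
      = comp (comp (comult C) (tmap idm (comult C))) (tmap Y1 (tmap Y2 Y3))"
  proof -
    have "pairing C Y1 (pairing C Y2 Y3)
        = comp (comult C) (tmap (comp idm Y1) (comp (comult C) (tmap Y2 Y3)))"
      by (simp add: pairing_eq_comp comp_idm_left)
    also have "\<dots> = comp (comp (comult C) (tmap idm (comult C))) (tmap Y1 (tmap Y2 Y3))"
      by (simp add: comp_tmap comp_assoc finite_rows_comult finite_rows_idm rows)
    finally show ?thesis .
  qed
  have fin: "finite {x. comp (comult C) (tmap (comult C) idm) c x \<noteq> 0}"
    by (rule finite_rowsD, rule finite_rows_comp[OF finite_rows_comult rows(1)])
  show ?thesis
    unfolding left right comp_def[of "comp (comult C) _"]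
    by (rule lin_reindex[where h = "\<lambda>((a, b), z). (a, (b, z))" and g = "\<lambda>(a, (b, z)). ((a, b), z)"])
       (use fin in \<open>auto simp: comult_coassoc, auto simp: tmap_def\<close>)
qed

lemma pairing_counit_left:
  assumes "finite_rows Y" "\<And>c. c \<notin> cb C \<Longrightarrow> Y c = (\<lambda>_. 0)"
  shows "pairing C (counit_map C) Y c ((), w) = Y c w"
proof (cases "c \<in> cb C")
  case True
  have fin: "finite {x. comult C c x \<noteq> 0}" using finite_rows_comult by (rule finite_rowsD)
  have "pairing C (counit_map C) Y c ((), w) = lin (\<lambda>p. lin Y (counit_left C p)) (comult C c) w"
    unfolding pairing_def
    by (rule lin_cong_support) (simp add: tmap_def counit_map_def counit_left_def lin_smult_idm)
  also have "\<dots> = lin Y (lin (counit_left C) (comult C c)) w"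
    using lin_comp[OF fin finite_rows_counit_left, of Y] by (simp add: comp_def)
  also have "\<dots> = Y c w" using comp_comult_counit_left[OF True] by (simp add: comp_def lin_idm)
  finally show ?thesis .
qed (simp add: pairing_outside assms)

lemma pairing_counit_right:
  assumes "finite_rows Y" "\<And>c. c \<notin> cb C \<Longrightarrow> Y c = (\<lambda>_. 0)"
  shows "pairing C Y (counit_map C) c (w, ()) = Y c w"
proof (cases "c \<in> cb C")
  case True
  have fin: "finite {x. comult C c x \<noteq> 0}" using finite_rows_comult by (rule finite_rowsD)
  have "pairing C Y (counit_map C) c (w, ()) = lin (\<lambda>p. lin Y (counit_right C p)) (comult C c) w"
    unfolding pairing_def
    by (rule lin_cong_support) (simp add: tmap_def counit_map_def counit_right_def lin_smult_idm mult.commute)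
  also have "\<dots> = lin Y (lin (counit_right C) (comult C c)) w"
    using lin_comp[OF fin finite_rows_counit_right, of Y] by (simp add: comp_def)
  also have "\<dots> = Y c w" using comp_comult_counit_right[OF True] by (simp add: comp_def lin_idm)
  finally show ?thesis .
qed (simp add: pairing_outside assms)

lemma comp_pairing_tmap:
  assumes "finite_rows W" "finite_rows Z"
  shows "comp (pairing C W Z) (tmap N1 N2) = pairing C (comp W N1) (comp Z N2)"
  using assms by (simp add: pairing_eq_comp comp_assoc finite_rows_comult finite_rows_tmap comp_tmap)

section \<open>Coalgebra maps\<close>

lemma
  assumes x: "x \<in> yon D C"
  shows yon_outside: "c \<notin> cb C \<Longrightarrow> x c = (\<lambda>_. 0)"
    and yon_finite_rows: "finite_rows x"
    and yon_comult: "comp (comult C) (tmap x x) = comp x (comult D)"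
    and yon_counit: "comp x (counit_map D) = counit_map C"
proof -
  have m: "coalg_map C D x" using x unfolding yon_def by simp
  show outside: "\<And>c. c \<notin> cb C \<Longrightarrow> x c = (\<lambda>_. 0)" using m unfolding coalg_map_def by blast
  show "finite_rows x" unfolding finite_rows_def
  proof
    fix c show "finite {b. x c b \<noteq> 0}"
      using m outside[of c] unfolding coalg_map_def vin_def by (cases "c \<in> cb C") auto
  qed
  show "comp (comult C) (tmap x x) = comp x (comult D)"
  proof
    fix c show "comp (comult C) (tmap x x) c = comp x (comult D) c"
    proof (cases "c \<in> cb C")
      case True then show ?thesis using m unfolding coalg_map_def comp_def by blast
    qed (simp add: comp_zero_row comult_outside outside)
  qed
  show "comp x (counit_map D) = counit_map C"
  proof (intro ext)
    fix c u show "comp x (counit_map D) c u = counit_map C c u"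
    proof (cases "c \<in> cb C")
      case True then show ?thesis
        using m unfolding coalg_map_def comp_def lin_def counit_map_def by auto
    qed (simp add: comp_zero_row counit_map_outside outside)
  qed
qed

lemma yon_support:
  assumes x: "x \<in> yon D C" and nz: "x a y \<noteq> 0"
  shows "a \<in> cb C" "y \<in> cb D"
proof -
  show a: "a \<in> cb C" using yon_outside[OF x] nz by fastforce
  have "vin (cb D) (x a)" using x a unfolding yon_def coalg_map_def by auto
  then show "y \<in> cb D" using nz unfolding vin_def by auto
qed

lemma yonI:
  assumes outside: "\<And>c. c \<notin> cb C \<Longrightarrow> x c = (\<lambda>_. 0)"
    and support: "\<And>c. c \<in> cb C \<Longrightarrow> vin (cb D) (x c)"
    and comult: "comp (comult C) (tmap x x) = comp x (comult D)"
    and counit: "comp x (counit_map D) = counit_map C"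
  shows "x \<in> yon D C"
  unfolding yon_def coalg_map_def
proof (intro CollectI conjI ballI allI impI)
  fix c assume c: "c \<in> cb C"
  show "vin (cb D) (x c)" using support c .
  show "lin (tmap x x) (comult C c) = lin (comult D) (x c)"
    using fun_cong[OF comult, of c] by (simp add: comp_def)
  show "(\<Sum>y | x c y \<noteq> 0. x c y * counit D y) = counit C c"
    using fun_cong[OF fun_cong[OF counit, of c], of "()"] by (simp add: comp_def lin_def counit_map_def)
qed (use outside in auto)

lemma comp_pairing_counit_left:
  assumes y: "y \<in> yon D C" and Y: "finite_rows Y" "\<And>c. c \<notin> cb C \<Longrightarrow> Y c = (\<lambda>_. 0)"
  shows "comp (pairing C y Y) (counit_left D) = Y"
proof (intro ext)
  fix c w
  have "comp (pairing C y Y) (counit_left D) c w = comp (pairing C y Y) (tmap (counit_map D) idm) c ((), w)"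
    unfolding counit_left_eq_tmap by (rule comp_reindex_column)
  also have "\<dots> = pairing C (counit_map C) Y c ((), w)"
    by (simp add: comp_pairing_tmap[OF yon_finite_rows[OF y] Y(1)] comp_idm_right[OF Y(1)] yon_counit[OF y])
  also have "\<dots> = Y c w" by (rule pairing_counit_left[OF Y])
  finally show "comp (pairing C y Y) (counit_left D) c w = Y c w" .
qed

lemma comp_pairing_counit_right:
  assumes y: "y \<in> yon D C" and Y: "finite_rows Y" "\<And>c. c \<notin> cb C \<Longrightarrow> Y c = (\<lambda>_. 0)"
  shows "comp (pairing C Y y) (counit_right D) = Y"
proof (intro ext)
  fix c w
  have "comp (pairing C Y y) (counit_right D) c w = comp (pairing C Y y) (tmap idm (counit_map D)) c (w, ())"
    unfolding counit_right_eq_tmap by (rule comp_reindex_column)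
  also have "\<dots> = pairing C Y (counit_map C) c (w, ())"
    by (simp add: comp_pairing_tmap[OF Y(1) yon_finite_rows[OF y]] comp_idm_right[OF Y(1)] yon_counit[OF y])
  also have "\<dots> = Y c w" by (rule pairing_counit_right[OF Y])
  finally show "comp (pairing C Y y) (counit_right D) c w = Y c w" .
qed

lemma pairing_marginal_left:
  assumes y: "y \<in> yon D C" and Y: "finite_rows Y" "\<And>c. c \<notin> cb C \<Longrightarrow> Y c = (\<lambda>_. 0)"
  shows "Y c w = (\<Sum>p. counit D p * pairing C y Y c (p, w))"
proof -
  have "finite {z. pairing C y Y c z \<noteq> 0}"
    by (rule finite_rowsD, rule finite_rows_pairing[OF yon_finite_rows[OF y] Y(1)])
  then show ?thesis
    using fun_cong[OF fun_cong[OF comp_pairing_counit_left[OF assms]], of c w]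
    by (simp add: comp_def lin_counit_left)
qed

lemma pairing_marginal_right:
  assumes y: "y \<in> yon D C" and Y: "finite_rows Y" "\<And>c. c \<notin> cb C \<Longrightarrow> Y c = (\<lambda>_. 0)"
  shows "Y c w = (\<Sum>q. pairing C Y y c (w, q) * counit D q)"
proof -
  have "finite {z. pairing C Y y c z \<noteq> 0}"
    by (rule finite_rowsD, rule finite_rows_pairing[OF Y(1) yon_finite_rows[OF y]])
  then show ?thesis
    using fun_cong[OF fun_cong[OF comp_pairing_counit_right[OF assms]], of c w]
    by (simp add: comp_def lin_counit_right)
qed

lemma lin_tmap_comult_swap:
  "lin (tmap x1 x2) (comult C c \<circ> prod.swap) (p, q) = pairing C x2 x1 c (q, p)"
  unfolding pairing_def
  by (rule lin_reindex[where h = prod.swap and g = prod.swap, symmetric])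
     (auto simp: tmap_def mult.commute finite_rowsD[OF finite_rows_comult])

lemma cprod_iff_commuting:
  "(x1, x2) \<in> cprod D1 D2 C \<longleftrightarrow> x1 \<in> yon D1 C \<and> x2 \<in> yon D2 C \<and> commuting C x1 x2"
proof -
  have comult_swap: "lin (comult C) v \<circ> prod.swap = lin (\<lambda>x. comult C x \<circ> prod.swap) v" for v
    by (auto simp: lin_def)
  have "(\<forall>v. vin (cb C) v \<longrightarrow>
          lin (tmap x1 x2) (lin (comult C) v) = lin (tmap x1 x2) (lin (comult C) v \<circ> prod.swap))
        \<longleftrightarrow> commuting C x1 x2"
  proof
    assume all: "\<forall>v. vin (cb C) v \<longrightarrow>
          lin (tmap x1 x2) (lin (comult C) v) = lin (tmap x1 x2) (lin (comult C) v \<circ> prod.swap)"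
    show "commuting C x1 x2" unfolding commuting_def
    proof (intro allI)
      fix c p q
      show "pairing C x1 x2 c (p, q) = pairing C x2 x1 c (q, p)"
      proof (cases "c \<in> cb C")
        case True
        then have "vin (cb C) (idm c :: 'c \<Rightarrow> 'k)" by (auto simp: vin_def idm_def)
        from all[rule_format, OF this]
        have "lin (tmap x1 x2) (comult C c) = lin (tmap x1 x2) (comult C c \<circ> prod.swap)"
          by (simp only: lin_idm)
        then show ?thesis
          using lin_tmap_comult_swap[of x1 x2 c p q] by (simp add: pairing_def)
      qed (simp add: pairing_outside)
    qed
  next
    assume "commuting C x1 x2"
    then have "comp (\<lambda>x. comult C x \<circ> prod.swap) (tmap x1 x2) = pairing C x1 x2"
      by (auto simp: fun_eq_iff comp_def lin_tmap_comult_swap commuting_def)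
    moreover have "finite {x. v x \<noteq> 0}" if "vin (cb C) v" for v :: "'c \<Rightarrow> 'k"
      using that by (simp add: vin_def)
    ultimately show "\<forall>v. vin (cb C) v \<longrightarrow>
          lin (tmap x1 x2) (lin (comult C) v) = lin (tmap x1 x2) (lin (comult C) v \<circ> prod.swap)"
      by (simp add: comult_swap lin_comp finite_rows_comult finite_rows_swap pairing_eq_comp)
  qed
  then show ?thesis unfolding cprod_def by auto
qed

end

section \<open>Precomposition\<close>

lemma comp_comultiplicative_in_yon:
  fixes C :: "('c, 'k::field) coalg" and T :: "('t, 'k) coalg"
  assumes co: "is_coalg C" and g: "g \<in> yon T C" and T_rows: "finite_rows (comult T)"
    and P_rows: "finite_rows P"
    and P_support: "\<And>d y. d \<in> cb T \<Longrightarrow> P d y \<noteq> 0 \<Longrightarrow> y \<in> cb D"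
    and P_comult: "comp (comult T) (tmap P P) = comp P (comult D)"
    and P_counit: "comp P (counit_map D) = counit_map T"
  shows "comp g P \<in> yon D C"
proof (rule yonI[OF co])
  have g_rows: "finite_rows g" using yon_finite_rows[OF co g] .
  fix c
  show "c \<notin> cb C \<Longrightarrow> comp g P c = (\<lambda>_. 0)" by (simp add: comp_zero_row yon_outside[OF co g])
  have "finite {y. comp g P c y \<noteq> 0}"
    unfolding comp_def by (rule finite_lin_support[OF finite_rowsD[OF g_rows] P_rows])
  moreover have "{y. comp g P c y \<noteq> 0} \<subseteq> cb D"
    unfolding comp_def by (auto elim!: lin_nonzeroE intro: P_support yon_support(2)[OF co g])
  ultimately show "vin (cb D) (comp g P c)" unfolding vin_def by simp
next
  have g_rows: "finite_rows g" using yon_finite_rows[OF co g] .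
  show "comp (comult C) (tmap (comp g P) (comp g P)) = comp (comp g P) (comult D)"
    by (simp add: comp_tmap[OF g_rows g_rows, symmetric] yon_comult[OF co g] P_comult
        comp_assoc[OF finite_rows_comult[OF co] finite_rows_tmap[OF g_rows g_rows], symmetric]
        comp_assoc[OF g_rows T_rows] comp_assoc[OF g_rows P_rows])
  show "comp (comp g P) (counit_map D) = counit_map C"
    by (simp add: comp_assoc[OF g_rows P_rows] P_counit yon_counit[OF co g])
qed

lemma comp_in_yon:
  fixes C :: "('c, 'k::field) coalg" and C' :: "('c2, 'k) coalg"
  assumes co: "is_coalg C" and co': "is_coalg C'" and f: "f \<in> yon C C'" and x: "x \<in> yon D C"
  shows "comp f x \<in> yon D C'"
  by (rule comp_comultiplicative_in_yon[OF co' f finite_rows_comult[OF co] yon_finite_rows[OF co x]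
        yon_support(2)[OF co x] yon_comult[OF co x] yon_counit[OF co x]])

lemma pairing_comp_natural:
  fixes C :: "('c, 'k::field) coalg" and C' :: "('c2, 'k) coalg"
  assumes co': "is_coalg C'" and f: "f \<in> yon C C'" and rows: "finite_rows (comult C)"
  shows "pairing C' (comp f x1) (comp f x2) = comp f (pairing C x1 x2)"
proof -
  have f_rows: "finite_rows f" using yon_finite_rows[OF co' f] .
  show ?thesis
    by (simp add: pairing_eq_comp comp_tmap[OF f_rows f_rows, symmetric] yon_comult[OF co' f]
        comp_assoc[OF finite_rows_comult[OF co'] finite_rows_tmap[OF f_rows f_rows], symmetric]
        comp_assoc[OF f_rows rows])
qed

lemma commuting_comp:
  fixes C :: "('c, 'k::field) coalg" and C' :: "('c2, 'k) coalg"
  assumes co: "is_coalg C" and co': "is_coalg C'" and f: "f \<in> yon C C'"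
    and "commuting C x1 x2"
  shows "commuting C' (comp f x1) (comp f x2)"
  unfolding commuting_def pairing_comp_natural[OF co' f finite_rows_comult[OF co]]
proof (intro allI)
  fix c p q
  show "comp f (pairing C x1 x2) c (p, q) = comp f (pairing C x2 x1) c (q, p)"
    unfolding comp_def by (rule lin_cong_support) (use assms(4) in \<open>simp add: commuting_def\<close>)
qed

section \<open>The tensor product coalgebra\<close>

text \<open>The middle-four interchange, identifying the bases of \<open>(D1 \<otimes> D2) \<otimes> (D1 \<otimes> D2)\<close> and
  \<open>(D1 \<otimes> D1) \<otimes> (D2 \<otimes> D2)\<close>.\<close>
definition tensor_shuffle :: "('a \<times> 'b) \<times> ('c \<times> 'd) \<Rightarrow> ('a \<times> 'c) \<times> ('b \<times> 'd)" where
  "tensor_shuffle q = ((fst (fst q), fst (snd q)), (snd (fst q), snd (snd q)))"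

lemma comult_tensor:
  "comult (tensor D1 D2) = (\<lambda>p q. tmap (comult D1) (comult D2) p (tensor_shuffle q))"
  by (intro ext) (simp add: tensor_def tmap_def tensor_shuffle_def)

lemma counit_map_tensor:
  "counit_map (tensor D1 D2) = (\<lambda>p u. tmap (counit_map D1) (counit_map D2) p ((), ()))"
  by (intro ext) (simp add: tensor_def tmap_def counit_map_def)

lemma pairing_four_assoc:
  assumes co: "is_coalg C"
  shows "pairing C (pairing C Y1 Y2) (pairing C Y3 Y4) c ((a1, a2), (b1, b2))
       = pairing C Y1 (pairing C (pairing C Y2 Y3) Y4) c (a1, ((a2, b1), b2))"
  unfolding pairing_assoc[OF co] by (rule pairing_cong_right) (simp add: pairing_assoc[OF co])

lemma pairing_in_yon_tensor:
  fixes C :: "('c, 'k::field) coalg"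
  assumes co: "is_coalg C" and x1: "x1 \<in> yon D1 C" and x2: "x2 \<in> yon D2 C"
    and commute: "commuting C x1 x2"
  shows "pairing C x1 x2 \<in> yon (tensor D1 D2) C"
proof (rule yonI[OF co])
  have rows1: "finite_rows x1" and rows2: "finite_rows x2"
    using yon_finite_rows[OF co x1] yon_finite_rows[OF co x2] .
  fix c
  show "c \<notin> cb C \<Longrightarrow> pairing C x1 x2 c = (\<lambda>_. 0)" by (rule pairing_outside[OF co])
  have "finite {y. pairing C x1 x2 c y \<noteq> 0}"
    by (rule finite_rowsD, rule finite_rows_pairing[OF co rows1 rows2])
  moreover have "{y. pairing C x1 x2 c y \<noteq> 0} \<subseteq> cb (tensor D1 D2)"
    unfolding pairing_def
    by (auto elim!: lin_nonzeroE simp: tmap_def tensor_def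
        intro: yon_support(2)[OF co x1] yon_support(2)[OF co x2])
  ultimately show "vin (cb (tensor D1 D2)) (pairing C x1 x2 c)" unfolding vin_def by simp
next
  have rows1: "finite_rows x1" and rows2: "finite_rows x2"
    using yon_finite_rows[OF co x1] yon_finite_rows[OF co x2] .
  have comult_pairing: "comp (pairing C x1 x2) (tmap (comult D1) (comult D2))
      = pairing C (pairing C x1 x1) (pairing C x2 x2)"
    unfolding comp_pairing_tmap[OF co rows1 rows2]
    by (simp add: pairing_eq_comp yon_comult[OF co x1, symmetric] yon_comult[OF co x2, symmetric])
  show "comp (comult C) (tmap (pairing C x1 x2) (pairing C x1 x2))
      = comp (pairing C x1 x2) (comult (tensor D1 D2))"
  proof (intro ext, clarify)
    fix c a1 a2 b1 b2
    have "comp (pairing C x1 x2) (comult (tensor D1 D2)) c ((a1, a2), b1, b2)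
        = pairing C (pairing C x1 x1) (pairing C x2 x2) c ((a1, b1), (a2, b2))"
      unfolding comult_tensor comp_reindex_column[where k = tensor_shuffle] comult_pairing
      by (simp add: tensor_shuffle_def)
    also have "\<dots> = pairing C x1 (pairing C (pairing C x1 x2) x2) c (a1, ((b1, a2), b2))"
      by (rule pairing_four_assoc[OF co])
    also have "\<dots> = pairing C x1 (pairing C (pairing C x2 x1) x2) c (a1, ((a2, b1), b2))"
      by (rule pairing_cong_right, rule pairing_cong_left) (use commute in \<open>simp add: commuting_def\<close>)
    also have "\<dots> = pairing C (pairing C x1 x2) (pairing C x1 x2) c ((a1, a2), (b1, b2))"
      by (rule pairing_four_assoc[OF co, symmetric])
    finally show "comp (comult C) (tmap (pairing C x1 x2) (pairing C x1 x2)) c ((a1, a2), b1, b2)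
       = comp (pairing C x1 x2) (comult (tensor D1 D2)) c ((a1, a2), b1, b2)"
      by (simp add: pairing_eq_comp)
  qed
  show "comp (pairing C x1 x2) (counit_map (tensor D1 D2)) = counit_map C"
  proof (intro ext)
    fix c u
    have "comp (pairing C x1 x2) (counit_map (tensor D1 D2)) c u
        = comp (pairing C x1 x2) (tmap (counit_map D1) (counit_map D2)) c ((), ())"
      unfolding counit_map_tensor by (rule comp_reindex_column[where k = "\<lambda>_. ((), ())"])
    also have "\<dots> = pairing C (counit_map C) (counit_map C) c ((), ())"
      by (simp add: comp_pairing_tmap[OF co rows1 rows2] yon_counit[OF co x1] yon_counit[OF co x2])
    also have "\<dots> = counit_map C c ()"
      by (rule pairing_counit_left[OF co finite_rows_counit_map counit_map_outside[OF co]])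
    finally show "comp (pairing C x1 x2) (counit_map (tensor D1 D2)) c u = counit_map C c u"
      by simp
  qed
qed

lemma comp_comult_tensor:
  fixes D1 :: "('d1, 'k::field) coalg" and D2 :: "('d2, 'k) coalg"
  assumes co1: "is_coalg D1" and co2: "is_coalg D2"
    and f_f': "\<And>a1 a2 b1 b2. f ((a1, a2), (b1, b2)) w = f' ((a1, b1), (a2, b2)) w'"
  shows "comp (comult (tensor D1 D2)) f d w = comp (tmap (comult D1) (comult D2)) f' d w'"
proof -
  have "finite {x. tmap (comult D1) (comult D2) d x \<noteq> 0}"
    by (rule finite_rowsD, rule finite_rows_tmap[OF finite_rows_comult[OF co1] finite_rows_comult[OF co2]])
  then show ?thesis unfolding comp_def
    by (rule lin_reindex[where h = tensor_shuffle and g = tensor_shuffle, rotated 2, symmetric])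
       (auto simp: tensor_shuffle_def comult_tensor f_f')
qed

lemma finite_rows_comult_tensor:
  assumes co1: "is_coalg D1" and co2: "is_coalg D2"
  shows "finite_rows (comult (tensor D1 D2))"
  unfolding finite_rows_def
proof
  fix d
  have "finite {x. tmap (comult D1) (comult D2) d x \<noteq> 0}"
    by (rule finite_rowsD, rule finite_rows_tmap[OF finite_rows_comult[OF co1] finite_rows_comult[OF co2]])
  then have "finite (tensor_shuffle -` {x. tmap (comult D1) (comult D2) d x \<noteq> 0})"
    by (rule finite_vimageI) (auto simp: inj_def tensor_shuffle_def prod_eq_iff)
  then show "finite {b. comult (tensor D1 D2) d b \<noteq> 0}"
    by (simp add: vimage_def comult_tensor)
qed

context
  fixes D1 :: "('d1, 'k::field) coalg" and D2 :: "('d2, 'k) coalg"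
  assumes co1: "is_coalg D1" and co2: "is_coalg D2"
begin

lemma comult_tensor_counit_right:
  "comp (comult (tensor D1 D2)) (tmap (counit_right D2) (counit_right D2)) = comp (counit_right D2) (comult D1)"
proof (intro ext, clarify)
  fix d1 d2 a b
  have "comp (comult (tensor D1 D2)) (tmap (counit_right D2) (counit_right D2)) (d1, d2) (a, b)
      = comp (tmap (comult D1) (comult D2)) (tmap idm (tmap (counit_map D2) (counit_map D2)))
          (d1, d2) ((a, b), ((), ()))"
    by (rule comp_comult_tensor[OF co1 co2]) (simp add: tmap_def counit_right_def counit_map_def idm_pair)
  also have "\<dots> = comult D1 d1 (a, b) * counit D2 d2"
    by (simp only: comp_tmap[OF finite_rows_comult[OF co1] finite_rows_comult[OF co2]])
       (simp add: comp_idm_right finite_rows_comult[OF co1] tmap_apply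
        pairing_counit_left[OF co2 finite_rows_counit_map counit_map_outside[OF co2], unfolded pairing_eq_comp],
        simp add: counit_map_def)
  also have "\<dots> = comp (counit_right D2) (comult D1) (d1, d2) (a, b)"
    by (simp add: comp_def counit_right_def lin_smult_idm mult.commute)
  finally show "comp (comult (tensor D1 D2)) (tmap (counit_right D2) (counit_right D2)) (d1, d2) (a, b)
      = comp (counit_right D2) (comult D1) (d1, d2) (a, b)" .
qed

lemma comult_tensor_counit_left:
  "comp (comult (tensor D1 D2)) (tmap (counit_left D1) (counit_left D1)) = comp (counit_left D1) (comult D2)"
proof (intro ext, clarify)
  fix d1 d2 a b
  have "comp (comult (tensor D1 D2)) (tmap (counit_left D1) (counit_left D1)) (d1, d2) (a, b)
      = comp (tmap (comult D1) (comult D2)) (tmap (tmap (counit_map D1) (counit_map D1)) idm)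
          (d1, d2) (((), ()), (a, b))"
    by (rule comp_comult_tensor[OF co1 co2]) (simp add: tmap_def counit_left_def counit_map_def idm_pair)
  also have "\<dots> = counit D1 d1 * comult D2 d2 (a, b)"
    by (simp only: comp_tmap[OF finite_rows_comult[OF co1] finite_rows_comult[OF co2]])
       (simp add: comp_idm_right finite_rows_comult[OF co2] tmap_apply
        pairing_counit_left[OF co1 finite_rows_counit_map counit_map_outside[OF co1], unfolded pairing_eq_comp],
        simp add: counit_map_def)
  also have "\<dots> = comp (counit_left D1) (comult D2) (d1, d2) (a, b)"
    by (simp add: comp_def counit_left_def lin_smult_idm)
  finally show "comp (comult (tensor D1 D2)) (tmap (counit_left D1) (counit_left D1)) (d1, d2) (a, b)
      = comp (counit_left D1) (comult D2) (d1, d2) (a, b)" .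
qed

lemma comult_tensor_split:
  assumes "d1 \<in> cb D1" "d2 \<in> cb D2"
  shows "comp (comult (tensor D1 D2)) (tmap (counit_right D2) (counit_left D1)) (d1, d2) (p, q)
    = idm (d1, d2) (p, q)"
proof -
  have "comp (comult (tensor D1 D2)) (tmap (counit_right D2) (counit_left D1)) (d1, d2) (p, q)
      = comp (tmap (comult D1) (comult D2)) (tmap (counit_right D1) (counit_left D2)) (d1, d2) (p, q)"
    by (rule comp_comult_tensor[OF co1 co2]) (simp add: tmap_def counit_right_def counit_left_def ac_simps)
  also have "\<dots> = idm (d1, d2) (p, q)"
    by (simp only: comp_tmap[OF finite_rows_comult[OF co1] finite_rows_comult[OF co2]])
       (simp add: tmap_apply idm_pair
        comp_comult_counit_right[OF co1 assms(1)] comp_comult_counit_left[OF co2 assms(2)])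
  finally show ?thesis .
qed

lemma comult_tensor_split_flip:
  assumes "d1 \<in> cb D1" "d2 \<in> cb D2"
  shows "comp (comult (tensor D1 D2)) (tmap (counit_left D1) (counit_right D2)) (d1, d2) (q, p)
    = idm (d1, d2) (p, q)"
proof -
  have "comp (comult (tensor D1 D2)) (tmap (counit_left D1) (counit_right D2)) (d1, d2) (q, p)
      = comp (tmap (comult D1) (comult D2)) (tmap (counit_left D1) (counit_right D2)) (d1, d2) (p, q)"
    by (rule comp_comult_tensor[OF co1 co2]) (simp add: tmap_def counit_right_def counit_left_def ac_simps)
  also have "\<dots> = idm (d1, d2) (p, q)"
    by (simp only: comp_tmap[OF finite_rows_comult[OF co1] finite_rows_comult[OF co2]])
       (simp add: tmap_apply idm_pair
        comp_comult_counit_left[OF co1 assms(1)] comp_comult_counit_right[OF co2 assms(2)])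
  finally show ?thesis .
qed

lemma counit_right_counit_map: "comp (counit_right D2) (counit_map D1) = counit_map (tensor D1 D2)"
  and counit_left_counit_map: "comp (counit_left D1) (counit_map D2) = counit_map (tensor D1 D2)"
  by (auto simp: fun_eq_iff comp_def counit_right_def counit_left_def lin_smult_idm counit_map_def
      tensor_def mult.commute)

lemma comp_counit_right_in_yon:
  assumes co: "is_coalg C" and g: "g \<in> yon (tensor D1 D2) C"
  shows "comp g (counit_right D2) \<in> yon D1 C"
proof (rule comp_comultiplicative_in_yon[OF co g finite_rows_comult_tensor[OF co1 co2] finite_rows_counit_right])
  show "y \<in> cb D1" if "d \<in> cb (tensor D1 D2)" "counit_right D2 d y \<noteq> 0" for d y
    using that by (auto simp: counit_right_def idm_def tensor_def split: if_splits)
qed (simp_all add: comult_tensor_counit_right counit_right_counit_map)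

lemma comp_counit_left_in_yon:
  assumes co: "is_coalg C" and g: "g \<in> yon (tensor D1 D2) C"
  shows "comp g (counit_left D1) \<in> yon D2 C"
proof (rule comp_comultiplicative_in_yon[OF co g finite_rows_comult_tensor[OF co1 co2] finite_rows_counit_left])
  show "y \<in> cb D2" if "d \<in> cb (tensor D1 D2)" "counit_left D1 d y \<noteq> 0" for d y
    using that by (auto simp: counit_left_def idm_def tensor_def split: if_splits)
qed (simp_all add: comult_tensor_counit_left counit_left_counit_map)

lemma
  fixes C :: "('c, 'k) coalg"
  assumes co: "is_coalg C" and g: "g \<in> yon (tensor D1 D2) C"
  shows pairing_projections: "pairing C (comp g (counit_right D2)) (comp g (counit_left D1)) = g"
    and commuting_projections: "commuting C (comp g (counit_right D2)) (comp g (counit_left D1))"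
proof -
  have g_rows: "finite_rows g" using yon_finite_rows[OF co g] .
  note natural = pairing_comp_natural[OF co g finite_rows_comult_tensor[OF co1 co2]]
  have g_support: "d \<in> cb D1 \<times> cb D2" if "g c d \<noteq> 0" for c d
    using yon_support(2)[OF co g that] by (simp add: tensor_def)
  have g_idm: "lin idm (g c) = g c" for c
    using fun_cong[OF comp_idm_right[OF g_rows], of c] by (simp add: comp_def)
  have split: "pairing C (comp g (counit_right D2)) (comp g (counit_left D1)) c (p, q) = g c (p, q)"
    for c p q
  proof -
    have "pairing C (comp g (counit_right D2)) (comp g (counit_left D1)) c (p, q)
        = lin (comp (comult (tensor D1 D2)) (tmap (counit_right D2) (counit_left D1))) (g c) (p, q)"
      by (simp only: natural) (simp add: pairing_eq_comp comp_def)
    also have "\<dots> = lin idm (g c) (p, q)"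
      by (rule lin_cong_support) (auto dest: g_support simp: comult_tensor_split)
    finally show ?thesis by (simp add: g_idm)
  qed
  have split_flip: "pairing C (comp g (counit_left D1)) (comp g (counit_right D2)) c (q, p) = g c (p, q)"
    for c p q
  proof -
    have "pairing C (comp g (counit_left D1)) (comp g (counit_right D2)) c (q, p)
        = lin (comp (comult (tensor D1 D2)) (tmap (counit_left D1) (counit_right D2))) (g c) (q, p)"
      by (simp only: natural) (simp add: pairing_eq_comp comp_def)
    also have "\<dots> = lin idm (g c) (p, q)"
      by (rule lin_cong_support) (auto dest: g_support simp: comult_tensor_split_flip)
    finally show ?thesis by (simp add: g_idm)
  qed
  show "pairing C (comp g (counit_right D2)) (comp g (counit_left D1)) = g"
    using split by (intro ext) auto
  show "commuting C (comp g (counit_right D2)) (comp g (counit_left D1))"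
    unfolding commuting_def using split split_flip by simp
qed

end

section \<open>The unit coalgebra\<close>

lemma yon_unitC:
  fixes C :: "('c, 'k::field) coalg"
  assumes co: "is_coalg C" and x: "x \<in> yon (unitC :: (unit, 'k) coalg) C"
  shows "x = counit_map C"
proof (intro ext)
  fix c and u :: unit
  show "x c u = counit_map C c u"
  proof (cases "c \<in> cb C")
    case True
    then have "(\<Sum>y | x c y \<noteq> 0. x c y * counit (unitC :: (unit, 'k) coalg) y) = counit C c"
      using x unfolding yon_def coalg_map_def by blast
    moreover have "(\<Sum>y | x c y \<noteq> 0. x c y * counit (unitC :: (unit, 'k) coalg) y) = x c ()"
    proof (cases "x c () = 0")
      case False
      then have "{y. x c y \<noteq> 0} = {()}" by auto
      then show ?thesis by (simp add: unitC_def)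
    qed simp
    ultimately show ?thesis by (simp add: counit_map_def)
  qed (simp add: yon_outside[OF co x] counit_map_outside[OF co])
qed

lemma
  fixes C :: "('c, 'k::field) coalg"
  assumes co: "is_coalg C" and x: "x \<in> yon D C"
  shows commuting_counit_left: "commuting C (counit_map C) x"
    and commuting_counit_right: "commuting C x (counit_map C)"
proof -
  have rows: "finite_rows x" and outside: "\<And>c. c \<notin> cb C \<Longrightarrow> x c = (\<lambda>_. 0)"
    using yon_finite_rows[OF co x] yon_outside[OF co x] by auto
  show "commuting C (counit_map C) x" "commuting C x (counit_map C)"
    unfolding commuting_def
    by (simp_all add: pairing_counit_left[OF co rows outside] pairing_counit_right[OF co rows outside])
qed

section \<open>Partial associativity\<close>

lemma commuting_pairing_flip:
  assumes "commuting C y z"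
  shows "commuting C (pairing C y z) x \<longleftrightarrow> commuting C (pairing C z y) x"
proof -
  have left: "pairing C (pairing C y z) x c ((q, r), p) = pairing C (pairing C z y) x c ((r, q), p)"
    for c q r p by (rule pairing_cong_left) (use assms in \<open>simp add: commuting_def\<close>)
  have right: "pairing C x (pairing C y z) c (p, (q, r)) = pairing C x (pairing C z y) c (p, (r, q))"
    for c q r p by (rule pairing_cong_right) (use assms in \<open>simp add: commuting_def\<close>)
  show ?thesis
    unfolding commuting_def split_paired_All left right by blast
qed

lemma commuting_assoc_forward:
  fixes C :: "('c, 'k::field) coalg"
  assumes co: "is_coalg C"
    and x1: "x1 \<in> yon D1 C" and x2: "x2 \<in> yon D2 C" and x3: "x3 \<in> yon D3 C"
    and commute12: "commuting C x1 x2" and commute12_3: "commuting C (pairing C x1 x2) x3"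
  shows "commuting C x2 x3" and "commuting C x1 (pairing C x2 x3)"
proof -
  have rows: "finite_rows x1" "finite_rows x2" "finite_rows x3"
    using yon_finite_rows[OF co x1] yon_finite_rows[OF co x2] yon_finite_rows[OF co x3] .
  note assoc = pairing_assoc[OF co]
  have flip12: "pairing C x1 x2 c (p, q) = pairing C x2 x1 c (q, p)" for c p q
    using commute12 unfolding commuting_def by blast
  have flip12_3: "pairing C (pairing C x1 x2) x3 c (w, r) = pairing C x3 (pairing C x1 x2) c (r, w)"
    for c w r using commute12_3 unfolding commuting_def by blast
  have flip13: "pairing C x1 x3 c (p, r) = pairing C x3 x1 c (r, p)" for c p r
  proof -
    have "pairing C x1 x3 c (p, r) = (\<Sum>q. counit D2 q * pairing C x2 (pairing C x1 x3) c (q, (p, r)))"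
      by (rule pairing_marginal_left[OF co x2 finite_rows_pairing[OF co rows(1,3)] pairing_outside[OF co]])
    also have "\<dots> = (\<Sum>q. pairing C (pairing C x3 x1) x2 c ((r, p), q) * counit D2 q)"
    proof (rule Sum_any.cong)
      fix q
      have "pairing C x2 (pairing C x1 x3) c (q, (p, r)) = pairing C (pairing C x1 x2) x3 c ((p, q), r)"
        by (simp add: assoc[symmetric] flip12 cong: pairing_cong_left)
      also have "\<dots> = pairing C (pairing C x3 x1) x2 c ((r, p), q)"
        by (subst flip12_3) (simp add: assoc)
      finally show "counit D2 q * pairing C x2 (pairing C x1 x3) c (q, (p, r))
          = pairing C (pairing C x3 x1) x2 c ((r, p), q) * counit D2 q"
        by (simp add: mult.commute)
    qed
    also have "\<dots> = pairing C x3 x1 c (r, p)"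
      by (rule pairing_marginal_right[OF co x2 finite_rows_pairing[OF co rows(3,1)] pairing_outside[OF co], symmetric])
    finally show ?thesis .
  qed
  show "commuting C x2 x3"
    unfolding commuting_def
  proof (intro allI)
    fix c q r
    have "pairing C x2 x3 c (q, r) = (\<Sum>p. counit D1 p * pairing C x1 (pairing C x2 x3) c (p, (q, r)))"
      by (rule pairing_marginal_left[OF co x1 finite_rows_pairing[OF co rows(2,3)] pairing_outside[OF co]])
    also have "\<dots> = (\<Sum>p. pairing C (pairing C x3 x2) x1 c ((r, q), p) * counit D1 p)"
    proof (rule Sum_any.cong)
      fix p
      have "pairing C x1 (pairing C x2 x3) c (p, (q, r)) = pairing C (pairing C x1 x2) x3 c ((p, q), r)"
        by (rule assoc[symmetric])
      also have "\<dots> = pairing C x3 (pairing C x1 x2) c (r, (p, q))"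
        by (rule flip12_3)
      also have "\<dots> = pairing C (pairing C x3 x2) x1 c ((r, q), p)"
        by (simp add: assoc flip12 cong: pairing_cong_right)
      finally show "counit D1 p * pairing C x1 (pairing C x2 x3) c (p, (q, r))
          = pairing C (pairing C x3 x2) x1 c ((r, q), p) * counit D1 p"
        by (simp add: mult.commute)
    qed
    also have "\<dots> = pairing C x3 x2 c (r, q)"
      by (rule pairing_marginal_right[OF co x1 finite_rows_pairing[OF co rows(3,2)] pairing_outside[OF co], symmetric])
    finally show "pairing C x2 x3 c (q, r) = pairing C x3 x2 c (r, q)" .
  qed
  show "commuting C x1 (pairing C x2 x3)"
    unfolding commuting_def split_paired_All
  proof (intro allI)
    fix c p q r
    have "pairing C x1 (pairing C x2 x3) c (p, (q, r)) = pairing C (pairing C x2 x1) x3 c ((q, p), r)"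
      by (simp add: assoc[symmetric] flip12 cong: pairing_cong_left)
    also have "\<dots> = pairing C x2 (pairing C x3 x1) c (q, (r, p))"
      by (simp add: assoc flip13 cong: pairing_cong_right)
    also have "\<dots> = pairing C (pairing C x2 x3) x1 c ((q, r), p)"
      by (simp add: assoc)
    finally show "pairing C x1 (pairing C x2 x3) c (p, (q, r)) = pairing C (pairing C x2 x3) x1 c ((q, r), p)" .
  qed
qed

lemma commuting_assoc:
  fixes C :: "('c, 'k::field) coalg"
  assumes co: "is_coalg C"
    and x1: "x1 \<in> yon D1 C" and x2: "x2 \<in> yon D2 C" and x3: "x3 \<in> yon D3 C"
  shows "commuting C x1 x2 \<and> commuting C (pairing C x1 x2) x3
    \<longleftrightarrow> commuting C x2 x3 \<and> commuting C x1 (pairing C x2 x3)"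
proof
  assume "commuting C x1 x2 \<and> commuting C (pairing C x1 x2) x3"
  then show "commuting C x2 x3 \<and> commuting C x1 (pairing C x2 x3)"
    using commuting_assoc_forward[OF co x1 x2 x3] by blast
next
  assume right: "commuting C x2 x3 \<and> commuting C x1 (pairing C x2 x3)"
  then have "commuting C (pairing C x2 x3) x1"
    by (simp add: commuting_sym[of C x1])
  with right have "commuting C x3 x2" "commuting C (pairing C x3 x2) x1"
    by (simp_all add: commuting_sym[of C x2 x3] commuting_pairing_flip[of C x2 x3 x1])
  from commuting_assoc_forward[OF co x3 x2 x1 this]
  have "commuting C x1 x2" "commuting C (pairing C x2 x1) x3"
    by (simp_all add: commuting_sym[of C x2 x1] commuting_sym[of C x3])
  then show "commuting C x1 x2 \<and> commuting C (pairing C x1 x2) x3"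
    using commuting_pairing_flip[of C x2 x1 x3] by (simp add: commuting_sym[of C x1 x2])
qed

section \<open>Products of representable presheaves\<close>

lemma cprod_subset_yon: "cprod D1 D2 C \<subseteq> yon D1 C \<times> yon D2 C"
  unfolding cprod_def by auto

lemma cprod_comp:
  fixes C :: "('c, 'k::field) coalg" and C' :: "('c2, 'k) coalg"
  assumes co: "is_coalg C" and co': "is_coalg C'" and f: "f \<in> yon C C'"
    and x: "(x1, x2) \<in> cprod D1 D2 C"
  shows "(comp f x1, comp f x2) \<in> cprod D1 D2 C'"
  using x unfolding cprod_iff_commuting[OF co] cprod_iff_commuting[OF co']
  by (simp add: comp_in_yon[OF co co' f] commuting_comp[OF co co' f])

lemma pairing_cprod_in_yon:
  assumes co: "is_coalg C" and "(x1, x2) \<in> cprod D1 D2 C"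
  shows "pairing C x1 x2 \<in> yon (tensor D1 D2) C"
  using assms pairing_in_yon_tensor[OF co] unfolding cprod_iff_commuting[OF co] by blast

lemma bij_betw_pairing_cprod:
  fixes C :: "('c, 'k::field) coalg" and D1 :: "('d1, 'k) coalg" and D2 :: "('d2, 'k) coalg"
  assumes co: "is_coalg C" and co1: "is_coalg D1" and co2: "is_coalg D2"
  shows "bij_betw (\<lambda>(x1, x2). pairing C x1 x2) (cprod D1 D2 C) (yon (tensor D1 D2) C)"
  unfolding bij_betw_def
proof
  show "inj_on (\<lambda>(x1, x2). pairing C x1 x2) (cprod D1 D2 C)"
  proof (rule inj_onI, clarify)
    fix x1 x2 y1 y2
    assume "(x1, x2) \<in> cprod D1 D2 C" "(y1, y2) \<in> cprod D1 D2 C"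
      and eq: "pairing C x1 x2 = pairing C y1 y2"
    then have x: "x1 \<in> yon D1 C" "x2 \<in> yon D2 C" and y: "y1 \<in> yon D1 C" "y2 \<in> yon D2 C"
      by (simp_all add: cprod_iff_commuting[OF co])
    have "x1 = comp (pairing C x1 x2) (counit_right D2)"
      by (rule comp_pairing_counit_right[OF co x(2) yon_finite_rows[OF co x(1)] yon_outside[OF co x(1)], symmetric])
    also have "\<dots> = y1"
      unfolding eq by (rule comp_pairing_counit_right[OF co y(2) yon_finite_rows[OF co y(1)] yon_outside[OF co y(1)]])
    finally have "x1 = y1" .
    have "x2 = comp (pairing C x1 x2) (counit_left D1)"
      by (rule comp_pairing_counit_left[OF co x(1) yon_finite_rows[OF co x(2)] yon_outside[OF co x(2)], symmetric])
    also have "\<dots> = y2"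
      unfolding eq by (rule comp_pairing_counit_left[OF co y(1) yon_finite_rows[OF co y(2)] yon_outside[OF co y(2)]])
    finally show "x1 = y1 \<and> x2 = y2" using \<open>x1 = y1\<close> by simp
  qed
  show "(\<lambda>(x1, x2). pairing C x1 x2) ` cprod D1 D2 C = yon (tensor D1 D2) C"
  proof
    show "(\<lambda>(x1, x2). pairing C x1 x2) ` cprod D1 D2 C \<subseteq> yon (tensor D1 D2) C"
      using pairing_cprod_in_yon[OF co] by auto
    show "yon (tensor D1 D2) C \<subseteq> (\<lambda>(x1, x2). pairing C x1 x2) ` cprod D1 D2 C"
    proof
      fix g assume g: "g \<in> yon (tensor D1 D2) C"
      have "(comp g (counit_right D2), comp g (counit_left D1)) \<in> cprod D1 D2 C"
        by (simp add: cprod_iff_commuting[OF co] comp_counit_right_in_yon[OF co1 co2 co g]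
            comp_counit_left_in_yon[OF co1 co2 co g] commuting_projections[OF co1 co2 co g])
      then show "g \<in> (\<lambda>(x1, x2). pairing C x1 x2) ` cprod D1 D2 C"
        by (rule rev_image_eqI) (simp add: pairing_projections[OF co1 co2 co g])
    qed
  qed
qed

lemma cprod_assoc:
  fixes C :: "('c, 'k::field) coalg"
  assumes co: "is_coalg C"
    and x1: "x1 \<in> yon D1 C" and x2: "x2 \<in> yon D2 C" and x3: "x3 \<in> yon D3 C"
  shows "(x1, x2) \<in> cprod D1 D2 C \<and> (pairing C x1 x2, x3) \<in> cprod (tensor D1 D2) D3 C
    \<longleftrightarrow> (x2, x3) \<in> cprod D2 D3 C \<and> (x1, pairing C x2 x3) \<in> cprod D1 (tensor D2 D3) C"
  unfolding cprod_iff_commuting[OF co]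
  using commuting_assoc[OF co x1 x2 x3] pairing_in_yon_tensor[OF co x1 x2] pairing_in_yon_tensor[OF co x2 x3]
    x1 x2 x3 by blast

lemma cprod_unitC_left:
  assumes co: "is_coalg C"
  shows "cprod (unitC :: (unit, 'k::field) coalg) D C = yon unitC C \<times> yon D C"
proof
  show "yon unitC C \<times> yon D C \<subseteq> cprod (unitC :: (unit, 'k) coalg) D C"
  proof clarify
    fix x0 x assume x0: "x0 \<in> yon (unitC :: (unit, 'k) coalg) C" and x: "x \<in> yon D C"
    show "(x0, x) \<in> cprod unitC D C"
      using x0 x commuting_counit_left[OF co x]
      by (simp add: cprod_iff_commuting[OF co] yon_unitC[OF co x0])
  qed
qed (rule cprod_subset_yon)

lemma cprod_unitC_right:
  assumes co: "is_coalg C"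
  shows "cprod D (unitC :: (unit, 'k::field) coalg) C = yon D C \<times> yon unitC C"
proof
  show "yon D C \<times> yon unitC C \<subseteq> cprod D (unitC :: (unit, 'k) coalg) C"
  proof clarify
    fix x x0 assume x: "x \<in> yon D C" and x0: "x0 \<in> yon (unitC :: (unit, 'k) coalg) C"
    show "(x, x0) \<in> cprod D unitC C"
      using x0 x commuting_counit_right[OF co x]
      by (simp add: cprod_iff_commuting[OF co] yon_unitC[OF co x0])
  qed
qed (rule cprod_subset_yon)

lemma cprod_swap:
  assumes co: "is_coalg C"
  shows "(x1, x2) \<in> cprod D1 D2 C \<longleftrightarrow> (x2, x1) \<in> cprod D2 D1 C"
  unfolding cprod_iff_commuting[OF co] commuting_sym[of C x1 x2] by blast

lemma cprod_pairing_swap: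
  assumes co: "is_coalg C" and "(x1, x2) \<in> cprod D1 D2 C"
  shows "pairing C x1 x2 c (a, b) = pairing C x2 x1 c (b, a)"
  using assms by (simp add: cprod_iff_commuting[OF co] commuting_def)

theorem mainTheorem1:
  fixes C :: "('c, 'k::field_char_0) coalg" and C' :: "('c2, 'k) coalg"
    and D1 :: "('d1, 'k) coalg" and D2 :: "('d2, 'k) coalg" and D3 :: "('d3, 'k) coalg"
  assumes "is_coalg C" "is_coalg C'" "is_coalg D1" "is_coalg D2" "is_coalg D3"
  shows
    \<comment> \<open>(i) sub-presheaf, pairing is a coalgebra map, natural isomorphism\<close>
    "cprod D1 D2 C \<subseteq> yon D1 C \<times> yon D2 C
     \<and> (\<forall>f x1 x2. f \<in> yon C C' \<and> (x1, x2) \<in> cprod D1 D2 C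
          \<longrightarrow> (comp f x1, comp f x2) \<in> cprod D1 D2 C')
     \<and> (\<forall>x1 x2. (x1, x2) \<in> cprod D1 D2 C \<longrightarrow> pairing C x1 x2 \<in> yon (tensor D1 D2) C)
     \<and> bij_betw (\<lambda>(x1, x2). pairing C x1 x2) (cprod D1 D2 C) (yon (tensor D1 D2) C)
     \<and> (\<forall>f x1 x2. f \<in> yon C C' \<and> (x1, x2) \<in> cprod D1 D2 C
          \<longrightarrow> pairing C' (comp f x1) (comp f x2) = comp f (pairing C x1 x2))
     \<comment> \<open>(ii) partial associativity\<close>
     \<and> (\<forall>x1 x2 x3. x1 \<in> yon D1 C \<and> x2 \<in> yon D2 C \<and> x3 \<in> yon D3 C \<longrightarrow>
          (((x1, x2) \<in> cprod D1 D2 C \<and> (pairing C x1 x2, x3) \<in> cprod (tensor D1 D2) D3 C)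
           \<longleftrightarrow> ((x2, x3) \<in> cprod D2 D3 C \<and> (x1, pairing C x2 x3) \<in> cprod D1 (tensor D2 D3) C))
          \<and> (((x1, x2) \<in> cprod D1 D2 C \<and> (pairing C x1 x2, x3) \<in> cprod (tensor D1 D2) D3 C)
             \<longrightarrow> (\<forall>c p q r. pairing C (pairing C x1 x2) x3 c ((p, q), r)
                           = pairing C x1 (pairing C x2 x3) c (p, (q, r)))))
     \<comment> \<open>(iii) unit\<close>
     \<and> cprod (unitC :: (unit, 'k) coalg) D1 C = yon unitC C \<times> yon D1 C
     \<and> cprod D1 (unitC :: (unit, 'k) coalg) C = yon D1 C \<times> yon unitC C
     \<comment> \<open>(iv) symmetry\<close>
     \<and> (\<forall>x1 x2. ((x1, x2) \<in> cprod D1 D2 C \<longleftrightarrow> (x2, x1) \<in> cprod D2 D1 C)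
          \<and> ((x1, x2) \<in> cprod D1 D2 C \<longrightarrow>
               (\<forall>c a b. pairing C x1 x2 c (a, b) = pairing C x2 x1 c (b, a))))"
proof -
  note co = assms(1) and co' = assms(2) and co1 = assms(3) and co2 = assms(4)
  show ?thesis
  proof (intro conjI allI impI; (elim conjE)?)
  qed (simp_all add: cprod_subset_yon cprod_comp[OF co co'] pairing_cprod_in_yon[OF co]
      bij_betw_pairing_cprod[OF co co1 co2] pairing_comp_natural[OF co' _ finite_rows_comult[OF co]]
      cprod_assoc[OF co] pairing_assoc[OF co] cprod_unitC_left[OF co] cprod_unitC_right[OF co]
      cprod_swap[OF co, THEN eqTrueI] cprod_pairing_swap[OF co])
qed

end
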